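(* Let $R$ be a commutative unital ring, and equip the category $\mathfrak{FdgMod}_R$ of filtered cochain complexes of $R$-modules with the model structure whose generating trivial cofibrations are $J=\{0\to D_R(n,p)\}_{n\in\mathbb Z,p\in\mathbb N}$ (so fibrations are the maps with the right lifting property with respect to $J$). Then a morphism $p:(M,F)\to(N,F)$ is a fibration if and only if $F^kp^n:F^kM^n\to F^kN^n$ is surjective for all $k\in\mathbb N$ and all $n\in\mathbb Z$.
   Context: A filtered cochain complex $(M,F)$ is a cochain complex $M$ of $R$-modules with a decreasing filtration by subcomplexes $F^kM$, $k\in\mathbb N$, $F^0M=M$; morphisms are filtration-preserving cochain maps. $D_R(n)$ is the complex with $R$ in degrees $n,n+1$ and identity differential between them; $D_R(n,p)$ is $D_R(n)$ with $F^k=D_R(n)$ for $k\le p$ and $F^k=0$ for $k>p$. *)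

theory Defs
  imports Main "HOL.Modules"
begin

text \<open>The modules M^n live as submodules of an ambient R-module (type 'm with scalar
  multiplication scl); car n is M^n, dif n is the differential M^n \<rightarrow> M^(n+1),
  filt k n is F^k M^n.\<close>

record ('r, 'm) fcc =
  scl :: "'r \<Rightarrow> 'm \<Rightarrow> 'm"
  car :: "int \<Rightarrow> 'm set"
  dif :: "int \<Rightarrow> 'm \<Rightarrow> 'm"
  filt :: "nat \<Rightarrow> int \<Rightarrow> 'm set"

definition submod :: "('r::comm_ring_1 \<Rightarrow> 'm::ab_group_add \<Rightarrow> 'm) \<Rightarrow> 'm set \<Rightarrow> bool" where
  "submod s S \<longleftrightarrow> 0 \<in> S \<and> (\<forall>x\<in>S. \<forall>y\<in>S. x + y \<in> S) \<and> (\<forall>x\<in>S. - x \<in> S)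
     \<and> (\<forall>r. \<forall>x\<in>S. s r x \<in> S)"

definition Rlinear_on :: "('r::comm_ring_1 \<Rightarrow> 'm::ab_group_add \<Rightarrow> 'm) \<Rightarrow> ('r \<Rightarrow> 'n::ab_group_add \<Rightarrow> 'n)
    \<Rightarrow> 'm set \<Rightarrow> ('m \<Rightarrow> 'n) \<Rightarrow> bool" where
  "Rlinear_on s t S f \<longleftrightarrow> (\<forall>x\<in>S. \<forall>y\<in>S. f (x + y) = f x + f y) \<and> (\<forall>r. \<forall>x\<in>S. f (s r x) = t r (f x))"

definition is_fcc :: "('r::comm_ring_1, 'm::ab_group_add) fcc \<Rightarrow> bool" where
  "is_fcc M \<longleftrightarrow> Modules.module (scl M)
     \<and> (\<forall>n. submod (scl M) (car M n))
     \<and> (\<forall>n. Rlinear_on (scl M) (scl M) (car M n) (dif M n))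
     \<and> (\<forall>n. \<forall>x\<in>car M n. dif M n x \<in> car M (n + 1))
     \<and> (\<forall>n. \<forall>x\<in>car M n. dif M (n + 1) (dif M n x) = 0)
     \<and> (\<forall>n. filt M 0 n = car M n)
     \<and> (\<forall>k n. submod (scl M) (filt M k n))
     \<and> (\<forall>k n. filt M (Suc k) n \<subseteq> filt M k n)
     \<and> (\<forall>k n. \<forall>x\<in>filt M k n. dif M n x \<in> filt M k (n + 1))"

text \<open>Morphisms: filtration-preserving cochain maps (given degreewise, relevant only on carriers).\<close>

definition fmor :: "('r::comm_ring_1, 'm::ab_group_add) fcc \<Rightarrow> ('r, 'n::ab_group_add) fcc
    \<Rightarrow> (int \<Rightarrow> 'm \<Rightarrow> 'n) \<Rightarrow> bool" where
  "fmor M N f \<longleftrightarrow> (\<forall>n. Rlinear_on (scl M) (scl N) (car M n) (f n))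
     \<and> (\<forall>k n. \<forall>x\<in>filt M k n. f n x \<in> filt N k n)
     \<and> (\<forall>n. \<forall>x\<in>car M n. f (n + 1) (dif M n x) = dif N n (f n x))"

definition zero_fcc :: "('r::comm_ring_1, 'r) fcc" where
  "zero_fcc = \<lparr>scl = (*), car = (\<lambda>_. {0}), dif = (\<lambda>_ _. 0), filt = (\<lambda>_ _. {0})\<rparr>"

definition disc_fcc :: "int \<Rightarrow> nat \<Rightarrow> ('r::comm_ring_1, 'r) fcc" where
  "disc_fcc n p =
     \<lparr>scl = (*),
      car = (\<lambda>m. if m = n \<or> m = n + 1 then UNIV else {0}),
      dif = (\<lambda>m. if m = n then id else (\<lambda>_. 0)),
      filt = (\<lambda>k m. if k \<le> p \<and> (m = n \<or> m = n + 1) then UNIV else {0})\<rparr>"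

definition has_rlp :: "('r::comm_ring_1, 'a::ab_group_add) fcc \<Rightarrow> ('r, 'b::ab_group_add) fcc
    \<Rightarrow> (int \<Rightarrow> 'a \<Rightarrow> 'b) \<Rightarrow> ('r, 'm::ab_group_add) fcc \<Rightarrow> ('r, 'n::ab_group_add) fcc
    \<Rightarrow> (int \<Rightarrow> 'm \<Rightarrow> 'n) \<Rightarrow> bool" where
  "has_rlp A B i M N P \<longleftrightarrow>
     (\<forall>u v. fmor A M u \<and> fmor B N v \<and> (\<forall>n. \<forall>x\<in>car A n. P n (u n x) = v n (i n x)) \<longrightarrow>
        (\<exists>h. fmor B M h \<and> (\<forall>n. \<forall>x\<in>car A n. h n (i n x) = u n x)
             \<and> (\<forall>n. \<forall>x\<in>car B n. P n (h n x) = v n x)))"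

definition fibration :: "('r::comm_ring_1, 'm::ab_group_add) fcc \<Rightarrow> ('r, 'n::ab_group_add) fcc
    \<Rightarrow> (int \<Rightarrow> 'm \<Rightarrow> 'n) \<Rightarrow> bool" where
  "fibration M N P \<longleftrightarrow>
     (\<forall>n p. has_rlp (zero_fcc :: ('r, 'r) fcc) (disc_fcc n p) (\<lambda>_ _. 0) M N P)"

end

theory Submission
  imports Defs
begin

text \<open>A morphism out of the disc D(n,p) is determined by the image y of 1 in degree n, and y may
  be any element of F^p M^n (it is sent to r \<mapsto> r y in degree n and r \<mapsto> r dy in degree n+1).
  Hence a square from 0 \<rightarrow> D(n,p) to P : M \<rightarrow> N is just an element of F^p N^n, a lift is an
  element of F^p M^n over it, and the lifting property against 0 \<rightarrow> D(n,p) says precisely that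
  F^p P^n is surjective.\<close>

lemma Rlinear_on_zero:
  assumes "Rlinear_on s t S f" and "0 \<in> S"
  shows "f 0 = 0"
proof -
  have "f (0 + 0) = f 0 + f 0" using assms unfolding Rlinear_on_def by blast
  then show ?thesis by simp
qed

lemma fcc_module: "is_fcc M \<Longrightarrow> module (scl M)"
  unfolding is_fcc_def by blast

lemma filt_antimono:
  assumes "is_fcc M" and "j \<le> k"
  shows "filt M k n \<subseteq> filt M j n"
proof -
  have "filt M (Suc i) n \<subseteq> filt M i n" for i using assms(1) unfolding is_fcc_def by blast
  then show ?thesis using lift_Suc_antimono_le[of "\<lambda>i. filt M i n"] assms(2) by blast
qed

lemma filt_subset_car: "is_fcc M \<Longrightarrow> filt M k n \<subseteq> car M n"
  using filt_antimono[of M 0 k n] unfolding is_fcc_def by simp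

lemma zero_in_filt: "is_fcc M \<Longrightarrow> 0 \<in> filt M k n"
  unfolding is_fcc_def submod_def by blast

lemma zero_in_car: "is_fcc M \<Longrightarrow> 0 \<in> car M n"
  using zero_in_filt filt_subset_car by blast

lemma scl_in_filt: "is_fcc M \<Longrightarrow> x \<in> filt M k n \<Longrightarrow> scl M r x \<in> filt M k n"
  unfolding is_fcc_def submod_def by blast

lemma dif_in_filt: "is_fcc M \<Longrightarrow> x \<in> filt M k n \<Longrightarrow> dif M n x \<in> filt M k (n + 1)"
  unfolding is_fcc_def by blast

lemma dif_in_car: "is_fcc M \<Longrightarrow> x \<in> car M n \<Longrightarrow> dif M n x \<in> car M (n + 1)"
  unfolding is_fcc_def by blast

lemma dif_scl: "is_fcc M \<Longrightarrow> x \<in> car M n \<Longrightarrow> dif M n (scl M r x) = scl M r (dif M n x)"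
  unfolding is_fcc_def Rlinear_on_def by blast

lemma dif_dif: "is_fcc M \<Longrightarrow> x \<in> car M n \<Longrightarrow> dif M (n + 1) (dif M n x) = 0"
  unfolding is_fcc_def by blast

lemma dif_zero:
  assumes "is_fcc M"
  shows "dif M n 0 = 0"
  using assms Rlinear_on_zero[OF _ zero_in_car[OF assms]] unfolding is_fcc_def by blast

lemma fmor_zero: "fmor M N f \<Longrightarrow> 0 \<in> car M n \<Longrightarrow> f n 0 = 0"
  using Rlinear_on_zero unfolding fmor_def by blast

lemma fmor_scl: "fmor M N f \<Longrightarrow> x \<in> car M n \<Longrightarrow> f n (scl M r x) = scl N r (f n x)"
  unfolding fmor_def Rlinear_on_def by blast

lemma fmor_dif: "fmor M N f \<Longrightarrow> x \<in> car M n \<Longrightarrow> f (n + 1) (dif M n x) = dif N n (f n x)"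
  unfolding fmor_def by blast

lemma fmor_filt: "fmor M N f \<Longrightarrow> x \<in> filt M k n \<Longrightarrow> f n x \<in> filt N k n"
  unfolding fmor_def by blast

lemma fmor_zero_fcc:
  assumes "is_fcc M"
  shows "fmor (zero_fcc :: ('r::comm_ring_1, 'r) fcc) M (\<lambda>_ _. 0)"
  using assms zero_in_filt[OF assms] dif_zero[OF assms]
  unfolding fmor_def zero_fcc_def Rlinear_on_def is_fcc_def submod_def
  by (auto simp: module.scale_zero_right)

definition disc_map :: "('r::comm_ring_1, 'm::ab_group_add) fcc \<Rightarrow> int \<Rightarrow> 'm \<Rightarrow> int \<Rightarrow> 'r \<Rightarrow> 'm" where
  "disc_map M n y m r =
     (if m = n then scl M r y else if m = n + 1 then scl M r (dif M n y) else 0)"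

lemma fmor_disc_map:
  assumes M: "is_fcc M" and y: "y \<in> filt M p n"
  shows "fmor (disc_fcc n p) M (disc_map M n y)"
proof -
  interpret module "scl M" using fcc_module[OF M] .
  have yc: "y \<in> car M n" using filt_subset_car[OF M] y by blast
  have dy: "dif M n y \<in> filt M p (n + 1)" using dif_in_filt[OF M y] .
  have linear: "Rlinear_on (scl (disc_fcc n p)) (scl M) (car (disc_fcc n p) m) (disc_map M n y m)"
    for m
    unfolding Rlinear_on_def disc_fcc_def disc_map_def
    by (auto simp: scale_left_distrib mult.commute)
  have filtered: "disc_map M n y m x \<in> filt M k m" if "x \<in> filt (disc_fcc n p) k m" for k m x
  proof (cases "k \<le> p \<and> (m = n \<or> m = n + 1)")
    case True
    then have "filt M p m \<subseteq> filt M k m" using filt_antimono[OF M] by blast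
    with True y dy show ?thesis
      unfolding disc_map_def using scl_in_filt[OF M] by auto
  next
    case False
    then have "x = 0" using that unfolding disc_fcc_def by auto
    then show ?thesis unfolding disc_map_def using zero_in_filt[OF M] by auto
  qed
  have cochain: "disc_map M n y (m + 1) (dif (disc_fcc n p) m x) = dif M m (disc_map M n y m x)"
    if "x \<in> car (disc_fcc n p) m" for m x
  proof -
    consider "m = n" | "m = n + 1" | "m \<noteq> n" "m \<noteq> n + 1"
      by blast
    then show ?thesis
    proof cases
      case 1
      then show ?thesis unfolding disc_map_def disc_fcc_def using dif_scl[OF M yc] by simp
    next
      case 2
      then show ?thesis
        unfolding disc_map_def disc_fcc_def
        using dif_dif[OF M yc] dif_scl[OF M dif_in_car[OF M yc]] by simp
    next
      case 3
      then have "x = 0" using that unfolding disc_fcc_def by auto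
      with 3 show ?thesis unfolding disc_map_def disc_fcc_def using dif_zero[OF M] by auto
    qed
  qed
  show ?thesis unfolding fmor_def using linear filtered cochain by blast
qed

lemma disc_map_at_one:
  assumes "is_fcc M"
  shows "disc_map M n y n 1 = y"
  using module.scale_one[OF fcc_module[OF assms]] unfolding disc_map_def by simp

lemma fmor_disc_eq_disc_map:
  assumes M: "is_fcc M" and f: "fmor (disc_fcc n p) M f"
    and x: "x \<in> car (disc_fcc n p :: ('r::comm_ring_1, 'r) fcc) m"
  shows "f m x = disc_map M n (f n 1) m x"
proof -
  have all: "(r::'r) \<in> car (disc_fcc n p) n" for r
    unfolding disc_fcc_def by simp
  have deg_n: "f n r = scl M r (f n 1)" for r
    using fmor_scl[OF f all[of 1], of r] by (simp add: disc_fcc_def)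
  have f1: "f n 1 \<in> car M n"
    using fmor_filt[OF f, of 1 0 n] M unfolding disc_fcc_def is_fcc_def by simp
  consider "m = n" | "m = n + 1" | "m \<noteq> n" "m \<noteq> n + 1"
    by blast
  then show ?thesis
  proof cases
    case 1
    then show ?thesis using deg_n[of x] unfolding disc_map_def by simp
  next
    case 2
    have "f (n + 1) x = dif M n (f n x)"
      using fmor_dif[OF f all[of x]] by (simp add: disc_fcc_def)
    also have "\<dots> = scl M x (dif M n (f n 1))" using deg_n[of x] dif_scl[OF M f1] by simp
    finally show ?thesis using 2 unfolding disc_map_def by simp
  next
    case 3
    then have "x = 0" using x unfolding disc_fcc_def by auto
    with 3 show ?thesis using fmor_zero[OF f] unfolding disc_map_def disc_fcc_def by simp
  qed
qed

lemma fmor_comp_disc_map: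
  assumes M: "is_fcc M" and P: "fmor M N P" and y: "y \<in> car M n"
  shows "P m (disc_map M n y m r) = disc_map N n (P n y) m r"
  using fmor_scl[OF P y] fmor_scl[OF P dif_in_car[OF M y]] fmor_dif[OF P y]
    fmor_zero[OF P zero_in_car[OF M]]
  unfolding disc_map_def by auto

lemma has_rlp_disc_iff:
  assumes M: "is_fcc M" and N: "is_fcc N" and P: "fmor M N P"
  shows "has_rlp (zero_fcc :: ('r::comm_ring_1, 'r) fcc) (disc_fcc n p) (\<lambda>_ _. 0) M N P
    \<longleftrightarrow> filt N p n \<subseteq> P n ` filt M p n"
proof
  assume rlp: "has_rlp (zero_fcc :: ('r, 'r) fcc) (disc_fcc n p) (\<lambda>_ _. 0) M N P"
  show "filt N p n \<subseteq> P n ` filt M p n"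
  proof
    fix y assume y: "y \<in> filt N p n"
    have square: "\<forall>m. \<forall>x\<in>car (zero_fcc :: ('r, 'r) fcc) m. P m 0 = disc_map N n y m 0"
      using fmor_zero[OF P zero_in_car[OF M]] module.scale_zero_left[OF fcc_module[OF N]]
      unfolding disc_map_def by simp
    obtain h where h: "fmor (disc_fcc n p) M h"
      and over: "\<forall>m. \<forall>x\<in>car (disc_fcc n p) m. P m (h m x) = disc_map N n y m x"
      using rlp fmor_zero_fcc[OF M] fmor_disc_map[OF N y] square unfolding has_rlp_def by blast
    have "h n 1 \<in> filt M p n" using fmor_filt[OF h, of 1 p n] by (simp add: disc_fcc_def)
    moreover have "P n (h n 1) = y"
      using over[rule_format, where m = n and x = 1] disc_map_at_one[OF N] by (simp add: disc_fcc_def)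
    ultimately show "y \<in> P n ` filt M p n" by force
  qed
next
  assume surj: "filt N p n \<subseteq> P n ` filt M p n"
  show "has_rlp (zero_fcc :: ('r, 'r) fcc) (disc_fcc n p) (\<lambda>_ _. 0) M N P"
    unfolding has_rlp_def
  proof (intro allI impI)
    fix u v
    assume "fmor (zero_fcc :: ('r, 'r) fcc) M u \<and> fmor (disc_fcc n p) N v
      \<and> (\<forall>m. \<forall>x\<in>car (zero_fcc :: ('r, 'r) fcc) m. P m (u m x) = v m 0)"
    then have u: "fmor (zero_fcc :: ('r, 'r) fcc) M u" and v: "fmor (disc_fcc n p) N v"
      by blast+
    have "v n 1 \<in> filt N p n" using fmor_filt[OF v, of 1 p n] by (simp add: disc_fcc_def)
    with surj have "v n 1 \<in> P n ` filt M p n" by (rule subsetD)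
    then obtain x where x: "x \<in> filt M p n" and Px: "P n x = v n 1" by (rule imageE) simp
    have xc: "x \<in> car M n" using x filt_subset_car[OF M] by blast
    show "\<exists>h. fmor (disc_fcc n p) M h
      \<and> (\<forall>m. \<forall>z\<in>car (zero_fcc :: ('r, 'r) fcc) m. h m 0 = u m z)
      \<and> (\<forall>m. \<forall>r\<in>car (disc_fcc n p) m. P m (h m r) = v m r)"
    proof (intro exI conjI ballI allI)
      show "fmor (disc_fcc n p) M (disc_map M n x)" using fmor_disc_map[OF M x] .
    next
      fix m z assume "z \<in> car (zero_fcc :: ('r, 'r) fcc) m"
      then show "disc_map M n x m 0 = u m z"
        using fmor_zero[OF u] module.scale_zero_left[OF fcc_module[OF M]]
        unfolding zero_fcc_def disc_map_def by simp
    next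
      fix m and r :: 'r assume r: "r \<in> car (disc_fcc n p) m"
      have "P m (disc_map M n x m r) = disc_map N n (v n 1) m r"
        using fmor_comp_disc_map[OF M P xc] Px by simp
      also have "\<dots> = v m r" using fmor_disc_eq_disc_map[OF N v r] by (rule sym)
      finally show "P m (disc_map M n x m r) = v m r" .
    qed
  qed
qed

theorem proposition1p19:
  fixes M :: "('r::comm_ring_1, 'm::ab_group_add) fcc"
    and N :: "('r, 'n::ab_group_add) fcc"
    and P :: "int \<Rightarrow> 'm \<Rightarrow> 'n"
  assumes "is_fcc M" and "is_fcc N" and "fmor M N P"
  shows "fibration M N P \<longleftrightarrow> (\<forall>k n. P n ` filt M k n = filt N k n)"
proof -
  have "P n ` filt M k n \<subseteq> filt N k n" for k n
    using fmor_filt[OF assms(3)] by blast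
  then have "(\<forall>k n. P n ` filt M k n = filt N k n) \<longleftrightarrow> (\<forall>n k. filt N k n \<subseteq> P n ` filt M k n)"
    by blast
  then show ?thesis
    unfolding fibration_def using has_rlp_disc_iff[OF assms] by simp
qed

end
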